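(* Under Assumption (A), there exists an integer $N$ such that for all $n\ge N$, $\mathbb E_\pi[1/A]\le 2/\delta$, where the expectation is over $x=(A,\mu,\theta_1,\dots,\theta_n)\sim\pi$.
   Context: Fix $V>0$, $a>0$, $b_0>0$. For each $n\ge2$ observed data $Y_1,\dots,Y_n\in\mathbb R$ are given; $\bar Y=\frac1n\sum_iY_i$, $\Delta=\Delta_n=\sum_{i=1}^n(Y_i-\bar Y)^2$. Model: $Y_i\mid\theta_i\sim\mathcal N(\theta_i,V)$, $\theta_i\mid\mu,A\sim\mathcal N(\mu,A)$ independently ($1\le i\le n$), flat prior on $\mu\in\mathbb R$, $A\sim\mathrm{IG}(a,b_0)$ (density $\propto A^{-a-1}e^{-b_0/A}$ on $(0,\infty)$). The posterior $\pi$ on $\mathcal X=(0,\infty)\times\mathbb R\times\mathbb R^n$, $x=(A,\mu,\theta_1,\dots,\theta_n)$, has density $\propto A^{-a-1}e^{-b_0/A}\prod_{i=1}^n A^{-1/2}e^{-(\theta_i-\mu)^2/(2A)}e^{-(Y_i-\theta_i)^2/(2V)}$. Assumption (A): there are $\delta>0$, $M<\infty$ and an integer $N_0$ with $\frac{\Delta_n}{n-1}\le M$ for all $n$ and $\frac{\Delta_n}{n-1}\ge V+\delta$ for all $n\ge N_0$. *)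

theory Defs
  imports "HOL-Probability.Probability"
begin

text \<open>Data: for each sample size n, the observations are Y n 0, ..., Y n (n-1)
  (a triangular array; the paper's Y_1..Y_n, re-indexed from 0).\<close>

definition Ybar :: "(nat \<Rightarrow> nat \<Rightarrow> real) \<Rightarrow> nat \<Rightarrow> real" where
  "Ybar Y n = (\<Sum>i<n. Y n i) / real n"

definition Delta :: "(nat \<Rightarrow> nat \<Rightarrow> real) \<Rightarrow> nat \<Rightarrow> real" where
  "Delta Y n = (\<Sum>i<n. (Y n i - Ybar Y n)^2)"

text \<open>Unnormalised posterior density at x = (A, mu, theta), theta :: nat => real
  with coordinates theta 0, ..., theta (n-1); zero for A <= 0.\<close>

definition post_dens ::
  "real \<Rightarrow> real \<Rightarrow> real \<Rightarrow> (nat \<Rightarrow> nat \<Rightarrow> real) \<Rightarrow> nat \<Rightarrow> real \<times> real \<times> (nat \<Rightarrow> real) \<Rightarrow> real" where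
  "post_dens V a b0 Y n x = (case x of (A, mu, theta) \<Rightarrow>
     if A > 0 then
       A powr (-a - 1) * exp (- b0 / A) *
       (\<Prod>i<n. A powr (-1/2) * exp (- ((theta i - mu) ^ 2) / (2 * A))
                              * exp (- ((Y n i - theta i) ^ 2) / (2 * V)))
     else 0)"

definition state_space :: "nat \<Rightarrow> (real \<times> real \<times> (nat \<Rightarrow> real)) measure" where
  "state_space n = lborel \<Otimes>\<^sub>M (lborel \<Otimes>\<^sub>M PiM {..<n} (\<lambda>_. lborel))"

definition post_expect ::
  "real \<Rightarrow> real \<Rightarrow> real \<Rightarrow> (nat \<Rightarrow> nat \<Rightarrow> real) \<Rightarrow> nat
    \<Rightarrow> (real \<times> real \<times> (nat \<Rightarrow> real) \<Rightarrow> real) \<Rightarrow> ennreal" where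
  "post_expect V a b0 Y n f =
     (\<integral>\<^sup>+ x. ennreal (f x * post_dens V a b0 Y n x) \<partial>state_space n)
     / (\<integral>\<^sup>+ x. ennreal (post_dens V a b0 Y n x) \<partial>state_space n)"

end

theory Submission
  imports Defs
begin

text \<open>Integrating out each \<open>\<theta>\<^sub>i\<close> (a Gaussian convolution) and then \<open>\<mu>\<close> (a Gaussian in \<open>\<mu>\<close>
  centred at the sample mean) leaves the marginal of \<open>A\<close> proportional to
  \<open>A\<^bsup>-a-1\<^esup> e\<^bsup>-b\<^sub>0/A\<^esup> exp (-(m/2) \<phi>(A + V))\<close> with \<open>\<phi>(s) = ln s + D/s\<close>, \<open>m = n - 1\<close> and \<open>D = \<Delta>/(n - 1)\<close>.
  The function \<open>\<phi>\<close> is minimal at \<open>s = D\<close>, i.e. at \<open>A = D - V \<ge> \<delta>\<close>, and on \<open>A < \<delta>/2\<close> it exceeds its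
  minimum by a gap depending only on \<open>V\<close> and \<open>\<delta>\<close>. So for large \<open>m\<close>, uniformly in \<open>D \<in> [V + \<delta>, M]\<close>,
  the mass near \<open>A = 0\<close>, where \<open>1/A\<close> is large, is negligible against the mass near the mode,
  where \<open>1/A \<le> 1/\<delta>\<close>; everywhere else \<open>1/A \<le> 2/\<delta>\<close>.\<close>

lemma nn_integral_exp_neg_square:
  fixes c m :: real
  assumes "c > 0"
  shows "(\<integral>\<^sup>+x. ennreal (exp (- (c * (x - m)\<^sup>2))) \<partial>lborel) = ennreal (sqrt (pi / c))"
proof -
  define \<sigma> where "\<sigma> = sqrt (1 / (2 * c))"
  have \<sigma>: "\<sigma> > 0" "\<sigma>\<^sup>2 = 1 / (2 * c)"
    using assms by (auto simp: \<sigma>_def)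
  have "exp (- (c * (x - m)\<^sup>2)) = sqrt (pi / c) * normal_density m \<sigma> x" for x
  proof -
    have "sqrt (2 * pi * \<sigma>\<^sup>2) = sqrt (pi / c)" "- (x - m)\<^sup>2 / (2 * \<sigma>\<^sup>2) = - (c * (x - m)\<^sup>2)"
      using \<sigma> assms by (simp_all add: field_simps)
    then show ?thesis
      using assms by (simp add: normal_density_def)
  qed
  moreover have "(\<integral>\<^sup>+x. ennreal (normal_density m \<sigma> x) \<partial>lborel) = 1"
    using \<sigma> by (subst nn_integral_eq_integral) auto
  ultimately show ?thesis
    using assms by (simp add: ennreal_mult nn_integral_cmult)
qed

lemma nn_integral_gaussian_convolution:
  fixes A V mu y :: real
  assumes "A > 0" "V > 0"
  shows "(\<integral>\<^sup>+t. ennreal (A powr (-1/2) * exp (- ((t - mu)\<^sup>2) / (2 * A))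
                              * exp (- ((y - t)\<^sup>2) / (2 * V))) \<partial>lborel)
       = ennreal (sqrt (2 * pi * V) / sqrt (A + V) * exp (- ((y - mu)\<^sup>2) / (2 * (A + V))))"
proof -
  define s where "s = A + V"
  define c where "c = s / (2 * A * V)"
  define m where "m = (V * mu + A * y) / s"
  have s: "s > 0" "c > 0"
    using assms by (auto simp: s_def c_def)
  \<comment> \<open>completing the square in t\<close>
  have square: "- ((t - mu)\<^sup>2) / (2 * A) + - ((y - t)\<^sup>2) / (2 * V)
      = - ((y - mu)\<^sup>2) / (2 * s) + - (c * (t - m)\<^sup>2)" for t
  proof -
    have "t - m = (s * t - V * mu - A * y) / s"
      using s by (simp add: m_def field_simps)
    then have rhs: "- ((y - mu)\<^sup>2) / (2 * s) + - (c * (t - m)\<^sup>2)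
        = - (A * V * (y - mu)\<^sup>2 + (s * t - V * mu - A * y)\<^sup>2) / (2 * A * V * s)"
      using assms s unfolding c_def by (simp add: field_simps power2_eq_square)
    have lhs: "- ((t - mu)\<^sup>2) / (2 * A) + - ((y - t)\<^sup>2) / (2 * V)
        = - (V * s * (t - mu)\<^sup>2 + A * s * (y - t)\<^sup>2) / (2 * A * V * s)"
      using assms s by (simp add: field_simps)
    have "V * s * (t - mu)\<^sup>2 + A * s * (y - t)\<^sup>2 = A * V * (y - mu)\<^sup>2 + (s * t - V * mu - A * y)\<^sup>2"
      unfolding s_def by (simp add: power2_eq_square algebra_simps)
    then show ?thesis
      unfolding lhs rhs by simp
  qed
  have const: "A powr (-1/2) * exp (- ((y - mu)\<^sup>2) / (2 * s)) * sqrt (pi / c)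
      = sqrt (2 * pi * V) / sqrt (A + V) * exp (- ((y - mu)\<^sup>2) / (2 * (A + V)))"
  proof -
    have "A powr (-1/2) = 1 / sqrt A"
      using assms by (simp add: powr_minus_divide powr_half_sqrt)
    moreover have "sqrt (pi / c) = sqrt A * sqrt (2 * pi * V) / sqrt s"
      using assms s unfolding c_def by (simp add: real_sqrt_divide real_sqrt_mult field_simps)
    ultimately show ?thesis
      using assms by (simp add: s_def)
  qed
  have "(\<integral>\<^sup>+t. ennreal (A powr (-1/2) * exp (- ((t - mu)\<^sup>2) / (2 * A))
                              * exp (- ((y - t)\<^sup>2) / (2 * V))) \<partial>lborel)
      = (\<integral>\<^sup>+t. ennreal (A powr (-1/2) * exp (- ((y - mu)\<^sup>2) / (2 * s)))
                 * ennreal (exp (- (c * (t - m)\<^sup>2))) \<partial>lborel)"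
  proof (intro nn_integral_cong)
    fix t
    have "exp (- ((t - mu)\<^sup>2) / (2 * A)) * exp (- ((y - t)\<^sup>2) / (2 * V))
        = exp (- ((y - mu)\<^sup>2) / (2 * s)) * exp (- (c * (t - m)\<^sup>2))"
      unfolding exp_add[symmetric] square ..
    then show "ennreal (A powr (-1/2) * exp (- ((t - mu)\<^sup>2) / (2 * A)) * exp (- ((y - t)\<^sup>2) / (2 * V)))
        = ennreal (A powr (-1/2) * exp (- ((y - mu)\<^sup>2) / (2 * s))) * ennreal (exp (- (c * (t - m)\<^sup>2)))"
      by (simp add: ennreal_mult[symmetric] mult.assoc)
  qed
  also have "\<dots> = ennreal (A powr (-1/2) * exp (- ((y - mu)\<^sup>2) / (2 * s)) * sqrt (pi / c))"
    using s by (simp add: nn_integral_cmult nn_integral_exp_neg_square ennreal_mult)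
  finally show ?thesis
    unfolding const .
qed

lemma sum_power2_diff_eq_Delta:
  "(\<Sum>i<n. (Y n i - mu)\<^sup>2) = Delta Y n + real n * (mu - Ybar Y n)\<^sup>2"
proof (cases "n = 0")
  case True
  then show ?thesis by (simp add: Delta_def)
next
  case False
  have "(\<Sum>i<n. (Y n i - mu)\<^sup>2)
      = (\<Sum>i<n. (Y n i - Ybar Y n)\<^sup>2 + 2 * (Ybar Y n - mu) * (Y n i - Ybar Y n) + (mu - Ybar Y n)\<^sup>2)"
    by (intro sum.cong) (auto simp: power2_eq_square algebra_simps)
  also have "\<dots> = Delta Y n + 2 * (Ybar Y n - mu) * (\<Sum>i<n. Y n i - Ybar Y n) + real n * (mu - Ybar Y n)\<^sup>2"
    by (simp add: sum.distrib sum_distrib_left Delta_def)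
  also have "(\<Sum>i<n. Y n i - Ybar Y n) = 0"
    using False by (simp add: sum_subtractf Ybar_def)
  finally show ?thesis by simp
qed

lemma post_dens_nonneg: "post_dens V a b0 Y n x \<ge> 0"
  by (auto simp: post_dens_def split: prod.splits intro!: prod_nonneg mult_nonneg_nonneg)

lemma post_dens_measurable [measurable]:
  "post_dens V a b0 Y n \<in> borel_measurable (lborel \<Otimes>\<^sub>M (lborel \<Otimes>\<^sub>M PiM {..<n} (\<lambda>_. lborel)))"
  unfolding post_dens_def by measurable

definition marginal_dens :: "real \<Rightarrow> real \<Rightarrow> real \<Rightarrow> real \<Rightarrow> real \<Rightarrow> real \<Rightarrow> real" where
  "marginal_dens V a b0 m D A =
     A powr (-a-1) * exp (-b0/A) * exp (-(m/2) * (ln (A + V) + D / (A + V)))"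

lemma marginal_dens_nonneg: "marginal_dens V a b0 m D A \<ge> 0"
  by (simp add: marginal_dens_def)

lemma marginal_dens_measurable [measurable]: "marginal_dens V a b0 m D \<in> borel_measurable borel"
  unfolding marginal_dens_def by measurable

lemma nn_integral_post_dens_theta:
  assumes "A > 0" "V > 0"
  shows "(\<integral>\<^sup>+theta. ennreal (post_dens V a b0 Y n (A, mu, theta)) \<partial>PiM {..<n} (\<lambda>_. lborel))
       = ennreal (A powr (-a-1) * exp (-b0/A) * (sqrt (2 * pi * V) / sqrt (A + V)) ^ n
                  * exp (- (\<Sum>i<n. (Y n i - mu)\<^sup>2) / (2 * (A + V))))"
proof -
  interpret product_sigma_finite "\<lambda>_::nat. lborel"
    by (simp add: product_sigma_finite_def lborel.sigma_finite_measure_axioms)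
  define P where "P = A powr (-a-1) * exp (-b0/A)"
  define q where "q i t = A powr (-1/2) * exp (- ((t - mu)\<^sup>2) / (2 * A))
                          * exp (- ((Y n i - t)\<^sup>2) / (2 * V))" for i t
  define g where "g i = sqrt (2 * pi * V) / sqrt (A + V) * exp (- ((Y n i - mu)\<^sup>2) / (2 * (A + V)))" for i
  have q_int: "(\<integral>\<^sup>+t. ennreal (q i t) \<partial>lborel) = ennreal (g i)" for i
    unfolding q_def g_def by (rule nn_integral_gaussian_convolution[OF assms])
  have "(\<integral>\<^sup>+theta. ennreal (post_dens V a b0 Y n (A, mu, theta)) \<partial>PiM {..<n} (\<lambda>_. lborel))
      = (\<integral>\<^sup>+theta. ennreal P * (\<Prod>i<n. ennreal (q i (theta i))) \<partial>PiM {..<n} (\<lambda>_. lborel))"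
  proof (intro nn_integral_cong)
    fix theta :: "nat \<Rightarrow> real"
    have "\<And>i. q i (theta i) \<ge> 0" "P \<ge> 0"
      by (simp_all add: q_def P_def)
    moreover have "post_dens V a b0 Y n (A, mu, theta) = P * (\<Prod>i<n. q i (theta i))"
      using assms by (simp add: post_dens_def P_def q_def)
    ultimately show "ennreal (post_dens V a b0 Y n (A, mu, theta)) = ennreal P * (\<Prod>i<n. ennreal (q i (theta i)))"
      by (simp add: prod_ennreal ennreal_mult prod_nonneg)
  qed
  also have "\<dots> = ennreal P * (\<Prod>i<n. \<integral>\<^sup>+t. ennreal (q i t) \<partial>lborel)"
    by (subst nn_integral_cmult, simp add: q_def,
        subst product_nn_integral_prod[symmetric]) (auto simp: q_def)
  also have "\<dots> = ennreal (P * (\<Prod>i<n. g i))"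
  proof -
    have "\<And>i. g i \<ge> 0" "P \<ge> 0"
      using assms by (simp_all add: g_def P_def)
    then show ?thesis
      by (simp add: q_int prod_ennreal ennreal_mult prod_nonneg)
  qed
  also have "(\<Prod>i<n. g i) = (sqrt (2 * pi * V) / sqrt (A + V)) ^ n
                          * exp (- (\<Sum>i<n. (Y n i - mu)\<^sup>2) / (2 * (A + V)))"
    unfolding g_def prod.distrib by (simp add: exp_sum[symmetric] sum_negf sum_divide_distrib)
  finally show ?thesis
    by (simp add: P_def mult.assoc)
qed

lemma marginal_dens_factor:
  assumes "A > 0" "V > 0" "n \<ge> 2"
  shows "A powr (-a-1) * exp (-b0/A) * (sqrt (2 * pi * V) / sqrt (A + V)) ^ n
           * exp (- S / (2 * (A + V))) * sqrt (pi / (real n / (2 * (A + V))))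
       = sqrt (2 * pi * V) ^ n * sqrt (2 * pi / n) * marginal_dens V a b0 (real n - 1) (S / (real n - 1)) A"
proof -
  define s where "s = A + V"
  have s: "s > 0" and m: "real n - 1 > 0"
    using assms by (simp_all add: s_def)
  have "-((real n - 1) / 2) * ln s = - (real (n - 1) * ln (sqrt s))"
    using s assms by (simp add: ln_sqrt of_nat_diff field_simps)
  then have "exp (-((real n - 1) / 2) * ln s) = 1 / sqrt s ^ (n - 1)"
    using s by (simp add: exp_minus exp_of_nat_mult inverse_eq_divide)
  moreover have "exp (-((real n - 1) / 2) * (ln s + S / (real n - 1) / s))
      = exp (-((real n - 1) / 2) * ln s) * exp (- S / (2 * s))"
    using m s by (simp add: exp_add[symmetric] field_simps)
  ultimately have marg: "exp (-((real n - 1) / 2) * (ln s + S / (real n - 1) / s))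
      = exp (- S / (2 * s)) / sqrt s ^ (n - 1)"
    by simp
  obtain j where j: "n = Suc j"
    using assms by (cases n) auto
  have "(sqrt (2 * pi * V) / sqrt s) ^ n * sqrt (pi / (real n / (2 * s)))
      = sqrt (2 * pi * V) ^ n * sqrt (2 * pi / n) / sqrt s ^ (n - 1)"
  proof -
    have "sqrt (pi / (real n / (2 * s))) = sqrt (2 * pi / n) * sqrt s"
      by (simp add: real_sqrt_mult[symmetric])
    then show ?thesis
      using s unfolding j by (simp add: power_divide field_simps)
  qed
  then have "A powr (-a-1) * exp (-b0/A) * (sqrt (2 * pi * V) / sqrt s) ^ n
           * exp (- S / (2 * s)) * sqrt (pi / (real n / (2 * s)))
      = A powr (-a-1) * exp (-b0/A) * exp (- S / (2 * s))
           * (sqrt (2 * pi * V) ^ n * sqrt (2 * pi / n) / sqrt s ^ (n - 1))"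
    by (simp only: ac_simps)
  also have "\<dots> = sqrt (2 * pi * V) ^ n * sqrt (2 * pi / n) * marginal_dens V a b0 (real n - 1) (S / (real n - 1)) A"
    unfolding marginal_dens_def s_def[symmetric] marg by (simp add: field_simps)
  finally show ?thesis
    unfolding s_def .
qed

lemma nn_integral_post_dens_slice:
  assumes "A > 0" "V > 0" "n \<ge> 2"
  shows "(\<integral>\<^sup>+y. ennreal (post_dens V a b0 Y n (A, y)) \<partial>(lborel \<Otimes>\<^sub>M PiM {..<n} (\<lambda>_. lborel)))
       = ennreal (sqrt (2 * pi * V) ^ n * sqrt (2 * pi / n)
                  * marginal_dens V a b0 (real n - 1) (Delta Y n / (real n - 1)) A)"
proof -
  interpret sigma_finite_measure "PiM {..<n} (\<lambda>_::nat. lborel)"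
    by (intro product_sigma_finite.sigma_finite)
       (simp_all add: product_sigma_finite_def lborel.sigma_finite_measure_axioms)
  define s where "s = A + V"
  define C where "C = A powr (-a-1) * exp (-b0/A) * (sqrt (2 * pi * V) / sqrt s) ^ n
                      * exp (- Delta Y n / (2 * s))"
  have "s > 0" "C \<ge> 0"
    using assms by (simp_all add: s_def C_def)
  have "(\<integral>\<^sup>+y. ennreal (post_dens V a b0 Y n (A, y)) \<partial>(lborel \<Otimes>\<^sub>M PiM {..<n} (\<lambda>_. lborel)))
      = (\<integral>\<^sup>+mu. \<integral>\<^sup>+theta. ennreal (post_dens V a b0 Y n (A, mu, theta)) \<partial>PiM {..<n} (\<lambda>_. lborel) \<partial>lborel)"
    by (subst nn_integral_fst[symmetric]) (simp_all add: split_beta')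
  also have "\<dots> = (\<integral>\<^sup>+mu. ennreal C * ennreal (exp (- (real n / (2 * s) * (mu - Ybar Y n)\<^sup>2))) \<partial>lborel)"
  proof (intro nn_integral_cong)
    fix mu
    have "- (\<Sum>i<n. (Y n i - mu)\<^sup>2) / (2 * s) = - Delta Y n / (2 * s) + - (real n / (2 * s) * (mu - Ybar Y n)\<^sup>2)"
      using \<open>s > 0\<close> unfolding sum_power2_diff_eq_Delta by (simp add: field_simps)
    then have "exp (- (\<Sum>i<n. (Y n i - mu)\<^sup>2) / (2 * s))
        = exp (- Delta Y n / (2 * s)) * exp (- (real n / (2 * s) * (mu - Ybar Y n)\<^sup>2))"
      by (simp add: exp_add[symmetric])
    then show "(\<integral>\<^sup>+theta. ennreal (post_dens V a b0 Y n (A, mu, theta)) \<partial>PiM {..<n} (\<lambda>_. lborel))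
        = ennreal C * ennreal (exp (- (real n / (2 * s) * (mu - Ybar Y n)\<^sup>2)))"
      using \<open>C \<ge> 0\<close> assms
      by (simp add: nn_integral_post_dens_theta C_def s_def ennreal_mult[symmetric] mult.assoc)
  qed
  also have "\<dots> = ennreal (C * sqrt (pi / (real n / (2 * s))))"
    using assms \<open>s > 0\<close> \<open>C \<ge> 0\<close>
    by (subst nn_integral_cmult, measurable, subst nn_integral_exp_neg_square)
       (simp_all add: ennreal_mult)
  finally show ?thesis
    using assms unfolding C_def s_def by (simp only: marginal_dens_factor)
qed

lemma nn_integral_post_dens_weighted:
  fixes h :: "real \<Rightarrow> real"
  assumes "V > 0" "n \<ge> 2" and [measurable]: "h \<in> borel_measurable borel"
    and h_nonneg: "\<And>A. A > 0 \<Longrightarrow> h A \<ge> 0"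
  shows "(\<integral>\<^sup>+x. ennreal (h (fst x) * post_dens V a b0 Y n x) \<partial>state_space n)
       = ennreal (sqrt (2 * pi * V) ^ n * sqrt (2 * pi / n))
         * (\<integral>\<^sup>+A. ennreal (if A > 0 then h A * marginal_dens V a b0 (real n - 1) (Delta Y n / (real n - 1)) A
                            else 0) \<partial>lborel)"
proof -
  interpret sigma_finite_measure "lborel \<Otimes>\<^sub>M PiM {..<n} (\<lambda>_::nat. lborel)"
    by (intro sigma_finite_pair_measure product_sigma_finite.sigma_finite lborel.sigma_finite_measure_axioms)
       (simp_all add: product_sigma_finite_def lborel.sigma_finite_measure_axioms)
  define K where "K = sqrt (2 * pi * V) ^ n * sqrt (2 * pi / n)"
  define Q where "Q A = marginal_dens V a b0 (real n - 1) (Delta Y n / (real n - 1)) A" for A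
  have "K \<ge> 0"
    using assms by (simp add: K_def)
  have slice: "(\<integral>\<^sup>+y. ennreal (h A * post_dens V a b0 Y n (A, y)) \<partial>(lborel \<Otimes>\<^sub>M PiM {..<n} (\<lambda>_. lborel)))
      = ennreal K * ennreal (if A > 0 then h A * Q A else 0)" for A
  proof (cases "A > 0")
    case True
    then have "(\<integral>\<^sup>+y. ennreal (h A * post_dens V a b0 Y n (A, y)) \<partial>(lborel \<Otimes>\<^sub>M PiM {..<n} (\<lambda>_. lborel)))
        = ennreal (h A) * ennreal (K * Q A)"
      using assms h_nonneg[OF True] post_dens_nonneg
      by (simp add: ennreal_mult nn_integral_cmult nn_integral_post_dens_slice K_def Q_def)
    then show ?thesis
      using True h_nonneg[OF True] \<open>K \<ge> 0\<close> marginal_dens_nonneg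
      by (simp add: Q_def ennreal_mult[symmetric] ac_simps)
  qed (simp add: post_dens_def)
  have "(\<integral>\<^sup>+x. ennreal (h (fst x) * post_dens V a b0 Y n x) \<partial>state_space n)
      = (\<integral>\<^sup>+A. \<integral>\<^sup>+y. ennreal (h A * post_dens V a b0 Y n (A, y)) \<partial>(lborel \<Otimes>\<^sub>M PiM {..<n} (\<lambda>_. lborel)) \<partial>lborel)"
    unfolding state_space_def by (subst nn_integral_fst[symmetric]) (simp_all add: split_beta')
  also have "\<dots> = ennreal K * (\<integral>\<^sup>+A. ennreal (if A > 0 then h A * Q A else 0) \<partial>lborel)"
    unfolding slice Q_def by (rule nn_integral_cmult) measurable
  finally show ?thesis
    unfolding K_def Q_def .
qed

lemma ln_add_div_antimono:
  fixes s t D :: real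
  assumes "0 < s" "s \<le> t" "t \<le> D"
  shows "ln t + D / t \<le> ln s + D / s"
proof -
  have "ln t - ln s \<le> t / s - 1"
    using assms ln_le_minus_one[of "t / s"] by (simp add: ln_div)
  also have "\<dots> = (t - s) / s"
    using assms by (simp add: field_simps)
  also have "\<dots> \<le> (D / t) * ((t - s) / s)"
    using assms mult_right_mono[of 1 "D / t" "(t - s) / s"] by simp
  also have "\<dots> = D / s - D / t"
    using assms by (simp add: field_simps)
  finally show ?thesis by simp
qed

lemma ln_add_div_ge_gap:
  fixes t D u :: real
  assumes "t > 0" "u > 1" "D \<ge> u * t"
  shows "ln D + 1 + (u - 1 - ln u) \<le> ln t + D / t"
proof -
  define v where "v = D / t"
  have "v \<ge> u"
    using assms by (simp add: v_def field_simps)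
  have "ln v - ln u \<le> v / u - 1"
    using assms \<open>v \<ge> u\<close> ln_le_minus_one[of "v / u"] by (simp add: ln_div)
  also have "\<dots> = (v - u) / u"
    using assms by (simp add: field_simps)
  also have "\<dots> \<le> v - u"
    using assms \<open>v \<ge> u\<close> by (simp add: divide_le_eq mult_left_mono[of 1 u "v - u", simplified])
  finally have "ln v - ln u \<le> v - u" .
  moreover have "D > 0"
    using assms mult_pos_pos[of u t] by linarith
  then have "ln D = ln v + ln t"
    using assms by (simp add: v_def ln_div)
  ultimately show ?thesis
    by (simp add: v_def)
qed

lemma ln_add_div_le:
  fixes s D :: real
  assumes "0 < D" "D \<le> s"
  shows "ln s + D / s \<le> ln D + 1 + (s - D) / D"
proof -
  have "ln s - ln D \<le> s / D - 1"
    using assms ln_le_minus_one[of "s / D"] by (simp add: ln_div)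
  moreover have "s / D - 1 = (s - D) / D" "D / s \<le> 1"
    using assms by (simp_all add: field_simps)
  ultimately show ?thesis by simp
qed

text \<open>Since \<open>e\<^sup>x \<ge> (x/k)\<^sup>k\<close>, the factor \<open>e\<^bsup>-b\<^sub>0/A\<^esub>\<close> beats any power of \<open>A\<close> near zero.\<close>

lemma powr_mult_exp_neg_inverse_le:
  fixes A a b0 e :: real and k :: nat
  assumes "0 < A" "A \<le> e" "b0 > 0" "real k \<ge> a + 2" "k \<ge> 1"
  shows "A powr (-a-2) * exp (-b0/A) \<le> real k ^ k / b0 ^ k * e powr (real k - a - 2)"
proof -
  have "(b0 / (real k * A)) ^ k \<le> exp (b0 / (real k * A)) ^ k"
    using assms by (intro power_mono) (auto intro: order_trans[OF _ exp_ge_add_one_self])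
  also have "\<dots> = exp (b0 / A)"
    using assms by (simp add: exp_of_nat_mult[symmetric])
  finally have "exp (-b0/A) \<le> (real k * A / b0) ^ k"
    using assms by (simp add: exp_minus power_divide field_simps)
  then have "A powr (-a-2) * exp (-b0/A) \<le> A powr (-a-2) * (real k * A / b0) ^ k"
    by (simp add: mult_left_mono)
  also have "\<dots> = real k ^ k / b0 ^ k * (A powr (-a-2) * A ^ k)"
    by (simp add: power_divide power_mult_distrib)
  also have "A powr (-a-2) * A ^ k = A powr (real k - a - 2)"
    using assms by (simp add: powr_realpow[symmetric] powr_add[symmetric] algebra_simps)
  also have "real k ^ k / b0 ^ k * \<dots> \<le> real k ^ k / b0 ^ k * e powr (real k - a - 2)"
    using assms by (intro mult_left_mono powr_mono2) auto
  finally show ?thesis .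
qed

lemma marginal_dens_le_near_zero:
  fixes V a b0 \<delta> m D A :: real and k :: nat
  assumes "V > 0" "b0 > 0" "m \<ge> 0" "V + \<delta> \<le> D" "0 < A" "A \<le> \<delta> / 2"
    and "real k \<ge> a + 2" "k \<ge> 1"
  shows "1 / A * marginal_dens V a b0 m D A
       \<le> real k ^ k / b0 ^ k * (\<delta> / 2) powr (real k - a - 2)
         * exp (-(m/2) * (ln (V + \<delta>/2) + D / (V + \<delta>/2)))"
proof -
  have "1 / A * A powr (-a-1) = A powr (-a-2)"
  proof -
    have "A powr (-a-1) = A powr (-a-2) * A powr 1"
      by (subst powr_add[symmetric]) (rule arg_cong[where f="\<lambda>t. A powr t"], simp)
    then show ?thesis
      using assms by simp
  qed
  then have eq: "1 / A * marginal_dens V a b0 m D A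
      = A powr (-a-2) * exp (-b0/A) * exp (-(m/2) * (ln (A + V) + D / (A + V)))"
    by (simp add: marginal_dens_def mult.assoc[symmetric])
  have prior: "A powr (-a-2) * exp (-b0/A) \<le> real k ^ k / b0 ^ k * (\<delta> / 2) powr (real k - a - 2)"
    using assms by (intro powr_mult_exp_neg_inverse_le) auto
  have "ln (V + \<delta>/2) + D / (V + \<delta>/2) \<le> ln (A + V) + D / (A + V)"
    using assms by (intro ln_add_div_antimono) auto
  then have "exp (-(m/2) * (ln (A + V) + D / (A + V))) \<le> exp (-(m/2) * (ln (V + \<delta>/2) + D / (V + \<delta>/2)))"
    using assms by (simp add: mult_left_mono)
  then show ?thesis
    unfolding eq by (rule mult_mono[OF prior]) (use assms in auto)
qed

lemma marginal_dens_ge_near_mode: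
  fixes V a b0 \<delta> m D A L c :: real
  assumes "V > 0" "a > 0" "b0 > 0" "m \<ge> 0" "c \<ge> 0" "V \<le> D"
    and "0 < \<delta>" "\<delta> \<le> A" "A \<le> L" "D \<le> A + V" "A + V \<le> D + c"
  shows "L powr (-a-1) * exp (-b0/\<delta>) * exp (-(m/2) * (ln D + 1 + c / V))
       \<le> marginal_dens V a b0 m D A"
proof -
  have "ln (A + V) + D / (A + V) \<le> ln D + 1 + (A + V - D) / D"
    using assms by (intro ln_add_div_le) auto
  also have "(A + V - D) / D \<le> c / V"
    using assms by (intro frac_le) auto
  finally have "exp (-(m/2) * (ln D + 1 + c / V)) \<le> exp (-(m/2) * (ln (A + V) + D / (A + V)))"
    using assms by (simp add: mult_left_mono)
  moreover have "L powr (-a-1) \<le> A powr (-a-1)"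
    using assms by (intro powr_mono2') auto
  moreover have "exp (-b0/\<delta>) \<le> exp (-b0/A)"
    using assms by (simp add: frac_le)
  ultimately show ?thesis
    unfolding marginal_dens_def by (intro mult_mono) auto
qed

text \<open>On \<open>A \<ge> \<delta>/2\<close> the weight \<open>1/A\<close> is at most \<open>2/\<delta>\<close>, and on \<open>J \<subseteq> [\<delta>, \<infinity>)\<close> even at most \<open>1/\<delta>\<close>;
  the spare \<open>1/\<delta>\<close> on \<open>J\<close> pays for the contribution of \<open>(0, \<delta>/2)\<close>.\<close>

lemma nn_integral_inverse_weight_le:
  fixes g :: "real \<Rightarrow> real" and \<delta> :: real and J :: "real set"
  assumes "\<delta> > 0" and [measurable]: "g \<in> borel_measurable borel" "J \<in> sets borel"
    and g_nonneg: "\<And>A. A > 0 \<Longrightarrow> g A \<ge> 0" and "J \<subseteq> {\<delta>..}"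
    and near_zero: "(\<integral>\<^sup>+A\<in>{0<..<\<delta>/2}. ennreal (1 / A * g A) \<partial>lborel)
                    \<le> ennreal (1 / \<delta>) * (\<integral>\<^sup>+A\<in>J. ennreal (g A) \<partial>lborel)"
  shows "(\<integral>\<^sup>+A. ennreal (if A > 0 then 1 / A * g A else 0) \<partial>lborel)
       \<le> ennreal (2 / \<delta>) * (\<integral>\<^sup>+A. ennreal (if A > 0 then g A else 0) \<partial>lborel)"
proof -
  define T where "T = {0<..<\<delta>/2}"
  define f where "f A = ennreal (if A > 0 then g A else 0)" for A
  have [measurable]: "T \<in> sets borel"
    by (simp add: T_def)
  have "ennreal (if A > 0 then 1 / A * g A else 0)
      \<le> ennreal (1 / A * g A) * indicator T A + ennreal (2 / \<delta>) * f A * indicator (- J) A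
        + ennreal (1 / \<delta>) * f A * indicator J A" for A
  proof (cases "A > 0 \<and> A \<notin> T")
    case True
    then have "A \<ge> \<delta> / 2" "g A \<ge> 0"
      using g_nonneg by (auto simp: T_def)
    moreover have "A \<in> J \<Longrightarrow> 1 / A \<le> 1 / \<delta>" "1 / A \<le> 2 / \<delta>"
      using assms \<open>A \<ge> \<delta> / 2\<close> by (auto simp: field_simps)
    ultimately have "A \<in> J \<Longrightarrow> 1 / A * g A \<le> 1 / \<delta> * g A" "1 / A * g A \<le> 2 / \<delta> * g A"
      by (metis mult_right_mono)+
    then show ?thesis
      using True assms \<open>g A \<ge> 0\<close>
      by (auto simp: f_def ennreal_mult[symmetric] indicator_def simp del: times_divide_eq_left intro!: ennreal_leI)
  qed (auto simp: T_def)
  then have "(\<integral>\<^sup>+A. ennreal (if A > 0 then 1 / A * g A else 0) \<partial>lborel)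
      \<le> (\<integral>\<^sup>+A\<in>T. ennreal (1 / A * g A) \<partial>lborel) + ennreal (2 / \<delta>) * (\<integral>\<^sup>+A\<in>- J. f A \<partial>lborel)
        + ennreal (1 / \<delta>) * (\<integral>\<^sup>+A\<in>J. f A \<partial>lborel)"
    by (subst nn_integral_add[symmetric] nn_integral_cmult[symmetric] mult.assoc, simp_all add: f_def)+
       (auto intro!: nn_integral_mono simp: mult.assoc)
  also have f_on_J: "(\<integral>\<^sup>+A\<in>J. f A \<partial>lborel) = (\<integral>\<^sup>+A\<in>J. ennreal (g A) \<partial>lborel)"
    using assms by (intro nn_integral_cong) (auto simp: f_def indicator_def)
  also have "(\<integral>\<^sup>+A\<in>T. ennreal (1 / A * g A) \<partial>lborel) + ennreal (2 / \<delta>) * (\<integral>\<^sup>+A\<in>- J. f A \<partial>lborel)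
        + ennreal (1 / \<delta>) * (\<integral>\<^sup>+A\<in>J. ennreal (g A) \<partial>lborel)
      \<le> ennreal (2 / \<delta>) * (\<integral>\<^sup>+A\<in>- J. f A \<partial>lborel)
        + (ennreal (1 / \<delta>) + ennreal (1 / \<delta>)) * (\<integral>\<^sup>+A\<in>J. ennreal (g A) \<partial>lborel)"
    using near_zero unfolding T_def by (simp add: distrib_right add_right_mono ac_simps)
  also have "\<dots> = ennreal (2 / \<delta>) * ((\<integral>\<^sup>+A\<in>- J. f A \<partial>lborel) + (\<integral>\<^sup>+A\<in>J. f A \<partial>lborel))"
    using assms f_on_J
    by (simp add: distrib_left ennreal_plus[symmetric] del: ennreal_plus)
  also have "(\<integral>\<^sup>+A\<in>- J. f A \<partial>lborel) + (\<integral>\<^sup>+A\<in>J. f A \<partial>lborel) = (\<integral>\<^sup>+A. f A \<partial>lborel)"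
    by (subst nn_integral_add[symmetric]) (auto simp: f_def indicator_def intro!: nn_integral_cong)
  finally show ?thesis
    unfolding f_def .
qed

lemma exp_neg_mult_le:
  fixes m \<gamma> \<epsilon> :: real
  assumes "\<gamma> > 0" "\<epsilon> > 0" "m \<ge> 1 / (\<gamma> * \<epsilon>)"
  shows "exp (- (m * \<gamma>)) \<le> \<epsilon>"
proof -
  have "m * \<gamma> \<ge> 1 / \<epsilon>" "1 / \<epsilon> > 0"
    using assms by (simp_all add: field_simps)
  have "m * \<gamma> \<le> exp (m * \<gamma>)"
    using exp_ge_add_one_self[of "m * \<gamma>"] by linarith
  moreover have pos: "m * \<gamma> > 0"
    using \<open>1 / \<epsilon> > 0\<close> \<open>m * \<gamma> \<ge> 1 / \<epsilon>\<close> by linarith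
  ultimately have "1 / exp (m * \<gamma>) \<le> 1 / (m * \<gamma>)"
    by (intro divide_left_mono) auto
  then have "exp (- (m * \<gamma>)) \<le> 1 / (m * \<gamma>)"
    by (simp add: exp_minus inverse_eq_divide)
  also have "\<dots> \<le> 1 / (1 / \<epsilon>)"
    using \<open>1 / \<epsilon> > 0\<close> \<open>m * \<gamma> \<ge> 1 / \<epsilon>\<close> pos by (intro divide_left_mono) auto
  finally show ?thesis
    by simp
qed

lemma marginal_dens_inverse_moment_le:
  fixes V a b0 \<delta> M :: real
  assumes "V > 0" "a > 0" "b0 > 0" "\<delta> > 0"
  shows "\<exists>N. \<forall>m D. N \<le> m \<longrightarrow> V + \<delta> \<le> D \<longrightarrow> D \<le> M \<longrightarrow>
           (\<integral>\<^sup>+A. ennreal (if A > 0 then 1 / A * marginal_dens V a b0 m D A else 0) \<partial>lborel)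
           \<le> ennreal (2 / \<delta>) * (\<integral>\<^sup>+A. ennreal (if A > 0 then marginal_dens V a b0 m D A else 0) \<partial>lborel)"
proof -
  define t0 where "t0 = V + \<delta>/2"
  define u where "u = (V + \<delta>) / t0"
  define \<gamma> where "\<gamma> = u - 1 - ln u"
  define c where "c = V * \<gamma> / 2"
  define k where "k = nat \<lceil>a + 2\<rceil>"
  define C1 where "C1 = real k ^ k / b0 ^ k * (\<delta>/2) powr (real k - a - 2)"
  define L where "L = max (M - V + c) \<delta>"
  define C2 where "C2 = L powr (-a-1) * exp (-b0/\<delta>)"
  define \<epsilon> where "\<epsilon> = 2 * C2 * c / (C1 * \<delta>\<^sup>2)"
  have "t0 > 0" "u > 1"
    using assms by (simp_all add: t0_def u_def field_simps)
  then have "\<gamma> > 0"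
    unfolding \<gamma>_def by (smt (verit) ln_eq_minus_one ln_le_minus_one)
  have "real k \<ge> a + 2"
    using assms by (auto simp: k_def)
  then have "k \<ge> 1"
    using assms by (cases k) auto
  have "c > 0" "C1 > 0" "C2 > 0" "\<epsilon> > 0"
    using assms \<open>\<gamma> > 0\<close> \<open>k \<ge> 1\<close> by (simp_all add: c_def C1_def C2_def L_def \<epsilon>_def)
  show ?thesis
  proof (intro exI allI impI)
    fix m D :: real
    assume m: "1 / (\<gamma> / 4 * \<epsilon>) \<le> m" and D: "V + \<delta> \<le> D" "D \<le> M"
    have "1 / (\<gamma> / 4 * \<epsilon>) > 0"
      using \<open>\<gamma> > 0\<close> \<open>\<epsilon> > 0\<close> by simp
    then have "m \<ge> 0"
      using m by linarith
    define e where "e = exp (-(m/2) * (ln D + 1 + \<gamma>/2))"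
    define J where "J = {D - V .. D - V + c}"
    have near_zero: "1 / A * marginal_dens V a b0 m D A \<le> C1 * e * exp (- (m * (\<gamma> / 4)))"
      if "A \<in> {0<..<\<delta>/2}" for A
    proof -
      have "ln D + 1 + \<gamma> \<le> ln t0 + D / t0"
        unfolding \<gamma>_def using \<open>t0 > 0\<close> \<open>u > 1\<close> D by (intro ln_add_div_ge_gap) (auto simp: u_def)
      then have "(m/2) * (ln D + 1 + \<gamma>) \<le> (m/2) * (ln t0 + D / t0)"
        using \<open>m \<ge> 0\<close> by (intro mult_left_mono) auto
      moreover have "-(m/2) * (ln D + 1 + \<gamma>/2) + - (m * (\<gamma> / 4)) = - ((m/2) * (ln D + 1 + \<gamma>))"
        by (simp add: algebra_simps)
      ultimately have "exp (-(m/2) * (ln t0 + D / t0)) \<le> e * exp (- (m * (\<gamma> / 4)))"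
        unfolding e_def exp_add[symmetric] by simp
      moreover have "1 / A * marginal_dens V a b0 m D A \<le> C1 * exp (-(m/2) * (ln t0 + D / t0))"
        unfolding C1_def t0_def using that assms D \<open>m \<ge> 0\<close> \<open>real k \<ge> a + 2\<close> \<open>k \<ge> 1\<close>
        by (intro marginal_dens_le_near_zero) auto
      ultimately show ?thesis
        using \<open>C1 > 0\<close> by (auto simp: mult.assoc intro: order_trans mult_left_mono)
    qed
    have near_mode: "C2 * e \<le> marginal_dens V a b0 m D A" if "A \<in> J" for A
      using marginal_dens_ge_near_mode[of V a b0 m c D \<delta> A L] that assms D \<open>m \<ge> 0\<close> \<open>c > 0\<close>
      unfolding C2_def e_def J_def L_def c_def by (auto simp: mult.commute)
    have "(\<integral>\<^sup>+A\<in>{0<..<\<delta>/2}. ennreal (1 / A * marginal_dens V a b0 m D A) \<partial>lborel)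
        \<le> (\<integral>\<^sup>+A. ennreal (C1 * e * exp (- (m * (\<gamma> / 4)))) * indicator {0<..<\<delta>/2} A \<partial>lborel)"
      using near_zero by (intro nn_integral_mono) (auto split: split_indicator intro: ennreal_leI)
    also have "\<dots> = ennreal (C1 * e * exp (- (m * (\<gamma> / 4))) * (\<delta> / 2))"
      using assms \<open>C1 > 0\<close> by (simp add: nn_integral_cmult_indicator ennreal_mult[symmetric] e_def)
    also have "\<dots> \<le> ennreal (1 / \<delta> * (C2 * e) * c)"
    proof (intro ennreal_leI)
      have "exp (- (m * (\<gamma> / 4))) \<le> \<epsilon>"
        using \<open>\<gamma> > 0\<close> \<open>\<epsilon> > 0\<close> m by (intro exp_neg_mult_le) auto
      then have "C1 * e * exp (- (m * (\<gamma> / 4))) * (\<delta> / 2) \<le> C1 * e * \<epsilon> * (\<delta> / 2)"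
        using \<open>C1 > 0\<close> assms by (intro mult_right_mono mult_left_mono) (auto simp: e_def)
      also have "\<dots> = 1 / \<delta> * (C2 * e) * c"
        using \<open>C1 > 0\<close> assms by (simp add: \<epsilon>_def field_simps power2_eq_square)
      finally show "C1 * e * exp (- (m * (\<gamma> / 4))) * (\<delta> / 2) \<le> 1 / \<delta> * (C2 * e) * c" .
    qed
    also have "\<dots> = ennreal (1 / \<delta>) * (\<integral>\<^sup>+A. ennreal (C2 * e) * indicator J A \<partial>lborel)"
      using assms \<open>C2 > 0\<close> \<open>c > 0\<close>
      by (simp add: J_def nn_integral_cmult_indicator ennreal_mult[symmetric] e_def)
    also have "\<dots> \<le> ennreal (1 / \<delta>) * (\<integral>\<^sup>+A\<in>J. ennreal (marginal_dens V a b0 m D A) \<partial>lborel)"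
      using near_mode
      by (intro mult_left_mono nn_integral_mono) (auto split: split_indicator intro: ennreal_leI)
    finally show "(\<integral>\<^sup>+A. ennreal (if A > 0 then 1 / A * marginal_dens V a b0 m D A else 0) \<partial>lborel)
        \<le> ennreal (2 / \<delta>) * (\<integral>\<^sup>+A. ennreal (if A > 0 then marginal_dens V a b0 m D A else 0) \<partial>lborel)"
      using assms D by (intro nn_integral_inverse_weight_le[of \<delta> _ J]) (auto simp: J_def marginal_dens_nonneg)
  qed
qed

lemma post_expect_inverse_eq:
  assumes "V > 0" "n \<ge> 2"
  shows "post_expect V a b0 Y n (\<lambda>(A, mu, theta). 1 / A)
       = (\<integral>\<^sup>+A. ennreal (if A > 0 then 1 / A * marginal_dens V a b0 (real n - 1) (Delta Y n / (real n - 1)) A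
                         else 0) \<partial>lborel)
         / (\<integral>\<^sup>+A. ennreal (if A > 0 then marginal_dens V a b0 (real n - 1) (Delta Y n / (real n - 1)) A
                           else 0) \<partial>lborel)"
proof -
  have K: "ennreal (sqrt (2 * pi * V) ^ n * sqrt (2 * pi / n)) \<noteq> 0"
    "ennreal (sqrt (2 * pi * V) ^ n * sqrt (2 * pi / n)) \<noteq> \<infinity>"
    using assms by simp_all
  show ?thesis
    using nn_integral_post_dens_weighted[OF assms, where h = "\<lambda>A. 1 / A"]
      nn_integral_post_dens_weighted[OF assms, where h = "\<lambda>_. 1"]
    unfolding post_expect_def
    by (simp add: split_beta' divide_mult_eq[OF K] mult.commute[of "ennreal _"] cong: if_cong)
qed

lemma ennreal_divide_le_of_le_mult:
  fixes x y c :: ennreal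
  assumes "x \<le> c * y"
  shows "x / y \<le> c"
proof (cases "y = 0 \<or> y = top")
  case True
  then show ?thesis
    using assms by auto
next
  case False
  then show ?thesis
    using assms by (metis divide_right_mono_ennreal mult_divide_eq_ennreal)
qed

theorem mainTheorem10:
  fixes V a b0 \<delta> M :: real and N0 :: nat and Y :: "nat \<Rightarrow> nat \<Rightarrow> real"
  assumes "V > 0" and "a > 0" and "b0 > 0"
    and "\<delta> > 0"
    and "\<And>n. n \<ge> 2 \<Longrightarrow> Delta Y n / (real n - 1) \<le> M"
    and "\<And>n. n \<ge> 2 \<Longrightarrow> n \<ge> N0 \<Longrightarrow> Delta Y n / (real n - 1) \<ge> V + \<delta>"
  shows "\<exists>N. \<forall>n\<ge>N. post_expect V a b0 Y n (\<lambda>(A, mu, theta). 1 / A) \<le> ennreal (2 / \<delta>)"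
proof -
  obtain N where N: "\<forall>m D. N \<le> m \<longrightarrow> V + \<delta> \<le> D \<longrightarrow> D \<le> M \<longrightarrow>
      (\<integral>\<^sup>+A. ennreal (if A > 0 then 1 / A * marginal_dens V a b0 m D A else 0) \<partial>lborel)
      \<le> ennreal (2 / \<delta>) * (\<integral>\<^sup>+A. ennreal (if A > 0 then marginal_dens V a b0 m D A else 0) \<partial>lborel)"
    using marginal_dens_inverse_moment_le[OF assms(1-4)] by blast
  show ?thesis
  proof (intro exI allI impI)
    fix n
    assume n: "max (max 2 N0) (nat \<lceil>N\<rceil> + 1) \<le> n"
    then have "N \<le> real n - 1"
      using real_nat_ceiling_ge[of N] by linarith
    then show "post_expect V a b0 Y n (\<lambda>(A, mu, theta). 1 / A) \<le> ennreal (2 / \<delta>)"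
      using N assms n by (simp add: post_expect_inverse_eq ennreal_divide_le_of_le_mult)
  qed
qed

end
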